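(* Under assumption (R), the function $\ell^{\mathrm{tr}}:[0,1]\times\mathbb R^d\times\mathbb S^d_+\to[0,+\infty]$ is nonnegative, is convex in $\Sigma_1\in\mathbb S^d_+$ for each fixed $(t,x)$, and is lower semicontinuous jointly in $(t,x,\Sigma_1)$.
   Context: Continuous reference data $\lambda_2:[0,1]\times\mathbb R^d\to(0,\infty)$, $\bar\Sigma_2:[0,1]\times\mathbb R^d\to\mathbb S^d_{++}$. Assumption (R): there are $0<\underline b\le\overline b<\infty$, $M>0$ with $\underline b\le\lambda_2\le\overline b$ and $\bar\Sigma_2\preceq MI_d$ everywhere. For $\Sigma_1\in\mathbb S^d_+$ let $\lambda_1:=\frac1d\mathrm{tr}(\bar\Sigma_2(t,x)^{-1}\Sigma_1)$ and, if $\Sigma_1\ne0$, $\bar\Sigma_1:=\Sigma_1/\lambda_1$. Define $\ell^{\mathrm{tr}}(t,x,\Sigma_1)=\lambda_1\log\frac{\lambda_1}{\lambda_2(t,x)}-\lambda_1+\lambda_2(t,x)-\frac{\lambda_1}2\log\det(\bar\Sigma_2(t,x)^{-1}\bar\Sigma_1)$ if $\Sigma_1\in\mathbb S^d_{++}$; $=\lambda_2(t,x)$ if $\Sigma_1=0$; $=+\infty$ if $\Sigma_1$ is singular and nonzero. *)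

theory Defs
  imports "HOL-Analysis.Analysis" "HOL-Library.Extended_Real"
begin

definition psd :: "real^'n^'n \<Rightarrow> bool" where
  "psd A \<longleftrightarrow> transpose A = A \<and> (\<forall>v. 0 \<le> v \<bullet> (A *v v))"

definition pd :: "real^'n^'n \<Rightarrow> bool" where
  "pd A \<longleftrightarrow> transpose A = A \<and> (\<forall>v. v \<noteq> 0 \<longrightarrow> 0 < v \<bullet> (A *v v))"

definition loewner_le :: "real^'n^'n \<Rightarrow> real^'n^'n \<Rightarrow> bool" where
  "loewner_le A B \<longleftrightarrow> (\<forall>v. v \<bullet> (A *v v) \<le> v \<bullet> (B *v v))"

definition ltr :: "(real \<Rightarrow> real^'n \<Rightarrow> real) \<Rightarrow> (real \<Rightarrow> real^'n \<Rightarrow> real^'n^'n)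
                   \<Rightarrow> real \<Rightarrow> real^'n \<Rightarrow> real^'n^'n \<Rightarrow> ereal" where
  "ltr lam2 Sig2 t x S1 =
     (if S1 = 0 then ereal (lam2 t x)
      else if pd S1 then
        (let l1 = trace (matrix_inv (Sig2 t x) ** S1) / real CARD('n);
             Sb1 = (1 / l1) *\<^sub>R S1
         in ereal (l1 * ln (l1 / lam2 t x) - l1 + lam2 t x
                   - l1 / 2 * ln (det (matrix_inv (Sig2 t x) ** Sb1))))
      else \<infinity>)"

definition ereal_convex_on :: "'a::real_vector set \<Rightarrow> ('a \<Rightarrow> ereal) \<Rightarrow> bool" where
  "ereal_convex_on C f \<longleftrightarrow> (\<forall>a\<in>C. \<forall>b\<in>C. \<forall>\<mu>::real. 0 \<le> \<mu> \<and> \<mu> \<le> 1 \<longrightarrow>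
      f (\<mu> *\<^sub>R a + (1 - \<mu>) *\<^sub>R b) \<le> ereal \<mu> * f a + ereal (1 - \<mu>) * f b)"

definition lsc_on :: "'a::topological_space set \<Rightarrow> ('a \<Rightarrow> ereal) \<Rightarrow> bool" where
  "lsc_on D f \<longleftrightarrow> (\<forall>p\<in>D. \<forall>c. c < f p \<longrightarrow> (\<forall>\<^sub>F q in at p within D. c < f q))"

end

theory Submission
  imports Defs "HOL-Real_Asymp.Real_Asymp"
begin

(* Write B = Sigma_2^-1 and lambda_1 = tr(B Sigma_1)/d. For positive definite Sigma_1,
   l^tr(Sigma_1) = phi(lambda_1) + lambda_1 g(Sigma_1 / lambda_1), where
   phi(l) = l log(l/lambda_2) - l + lambda_2 is the relative entropy of Poisson intensities and
   g(X) = -1/2 log det(B X). Both terms are nonnegative: phi because log y <= y - 1, and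
   g(X) <= 0 when tr(B X) = d by the AM-GM inequality for the eigenvalues of a congruent
   symmetric matrix. Both are convex on {0} union S^d_++: phi composed with the linear map
   lambda_1, and the second term as the perspective of g, which is convex because log det is
   concave (diagonalise two positive definite matrices simultaneously). Lower semicontinuity:
   at a positive definite Sigma_1 the finite formula is continuous; at Sigma_1 = 0 the bound
   l^tr >= phi(lambda_1) suffices, phi being continuous up to lambda_1 = 0; at a singular
   Sigma_1 <> 0, lambda_1 stays away from 0 while det(B Sigma_1 / lambda_1) -> 0, so the
   log-det term tends to +infinity. *)

section \<open>Scalar functions\<close>

lemma diff_le_mult_ln_div:
  fixes a b :: real
  assumes "0 \<le> a" "0 < b"
  shows "a - b \<le> a * ln (a / b)"
proof (cases "a = 0")
  case False
  then have "ln (b / a) \<le> b / a - 1" using assms by (intro ln_le_minus_one) simp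
  then have "a * (- ln (a / b)) \<le> a * (b / a - 1)" using assms False by (simp add: ln_div)
  then show ?thesis using assms False by (simp add: algebra_simps)
qed (use assms in simp)

lemma convex_on_linear_compose:
  assumes "linear l" "convex_on T f" "l ` S \<subseteq> T" "convex S"
  shows "convex_on S (\<lambda>x. f (l x))"
proof (rule convex_onI)
  fix t :: real and x y assume "0 < t" "t < 1" "x \<in> S" "y \<in> S"
  then show "f (l ((1 - t) *\<^sub>R x + t *\<^sub>R y)) \<le> (1 - t) * f (l x) + t * f (l y)"
    using assms convex_onD[OF assms(2), of t "l x" "l y"] by (auto simp: linear_add linear_scale)
qed (fact assms(4))

lemma concave_on_cong: "(\<And>x. x \<in> S \<Longrightarrow> f x = g x) \<Longrightarrow> concave_on S f \<longleftrightarrow> concave_on S g"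
  by (auto simp: concave_on_iff convex_def)

context
  fixes l :: "'a::real_vector \<Rightarrow> real" and C :: "'a set" and g :: "'a \<Rightarrow> real"
  assumes l: "linear l" and C: "convex C" and pos: "\<And>x. x \<in> C \<Longrightarrow> 0 < l x"
    and cone: "\<And>x s. x \<in> C \<Longrightarrow> 0 < s \<Longrightarrow> s *\<^sub>R x \<in> C"
    and g: "convex_on C g"
begin

lemma perspective_convex_combination:
  assumes x: "x \<in> C" and y: "y \<in> C" and t: "0 \<le> t" "t \<le> 1"
  defines "z \<equiv> (1 - t) *\<^sub>R x + t *\<^sub>R y"
  shows "l z * g (z /\<^sub>R l z) \<le> (1 - t) * (l x * g (x /\<^sub>R l x)) + t * (l y * g (y /\<^sub>R l y))"
proof -
  have "z \<in> C" unfolding z_def using C x y t by (simp add: convex_alt)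
  have lz: "l z = (1 - t) * l x + t * l y" unfolding z_def by (simp add: linear_add[OF l] linear_scale[OF l])
  have lpos: "0 < l x" "0 < l y" "0 < l z" using pos x y \<open>z \<in> C\<close> by auto
  define \<theta> where "\<theta> = t * l y / l z"
  have "\<theta> \<le> 1" "0 \<le> \<theta>" using lz lpos t by (auto simp: \<theta>_def divide_le_eq)
  have one_minus: "1 - \<theta> = (1 - t) * l x / l z" using lz lpos by (simp add: \<theta>_def field_simps)
  have "(1 - \<theta>) *\<^sub>R (x /\<^sub>R l x) + \<theta> *\<^sub>R (y /\<^sub>R l y) = ((1 - t) / l z) *\<^sub>R x + (t / l z) *\<^sub>R y"
    unfolding one_minus unfolding \<theta>_def using lpos by (simp add: field_simps)
  also have "\<dots> = z /\<^sub>R l z"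
    unfolding z_def by (simp add: scaleR_add_right divide_inverse_commute)
  finally have "g (z /\<^sub>R l z) = g ((1 - \<theta>) *\<^sub>R (x /\<^sub>R l x) + \<theta> *\<^sub>R (y /\<^sub>R l y))" by simp
  also have "\<dots> \<le> (1 - \<theta>) * g (x /\<^sub>R l x) + \<theta> * g (y /\<^sub>R l y)"
    using \<open>0 \<le> \<theta>\<close> \<open>\<theta> \<le> 1\<close> cone x y lpos by (intro convex_onD[OF g]) auto
  finally have "l z * g (z /\<^sub>R l z) \<le> l z * ((1 - \<theta>) * g (x /\<^sub>R l x) + \<theta> * g (y /\<^sub>R l y))"
    using lpos by (simp add: mult_left_mono)
  also have "\<dots> = (1 - t) * (l x * g (x /\<^sub>R l x)) + t * (l y * g (y /\<^sub>R l y))"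
    unfolding one_minus unfolding \<theta>_def using lpos by (simp add: field_simps)
  finally show ?thesis .
qed

lemma convex_on_perspective: "convex_on (insert 0 C) (\<lambda>x. l x * g (x /\<^sub>R l x))"
proof -
  define P where "P x = l x * g (x /\<^sub>R l x)" for x
  have homogeneous: "P (s *\<^sub>R x) = s * P x" if "x \<in> insert 0 C" "0 \<le> s" for s x
  proof (cases "s = 0 \<or> x = 0")
    case False
    then have "0 < s" "0 < l x" using that pos by auto
    then show ?thesis unfolding P_def using linear_scale[OF l] by (simp add: field_simps)
  qed (auto simp: P_def linear_0[OF l])
  have "convex (insert 0 C)" using C cone by (auto simp: convex_alt)
  then show ?thesis
    unfolding P_def[symmetric]
  proof (rule convex_onI[rotated])
    fix t :: real and x y assume t: "0 < t" "t < 1" and xy: "x \<in> insert 0 C" "y \<in> insert 0 C"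
    show "P ((1 - t) *\<^sub>R x + t *\<^sub>R y) \<le> (1 - t) * P x + t * P y"
    proof (cases "x = 0 \<or> y = 0")
      case True
      then show ?thesis using homogeneous xy t by (auto simp: P_def linear_0[OF l])
    next
      case False
      then show ?thesis using xy t perspective_convex_combination[of x y t] by (simp add: P_def)
    qed
  qed
qed

end

text \<open>At \<open>l = 0\<close> the convention \<open>0 * ln 0 = 0\<close> gives the continuous extension \<open>poisson_kl c 0 = c\<close>.\<close>
definition poisson_kl :: "real \<Rightarrow> real \<Rightarrow> real" where
  "poisson_kl c l = l * ln (l / c) - l + c"

lemma poisson_kl_nonneg: "0 \<le> l \<Longrightarrow> 0 < c \<Longrightarrow> 0 \<le> poisson_kl c l"
  using diff_le_mult_ln_div[of l c] by (simp add: poisson_kl_def)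

lemma convex_on_mult_ln_div:
  assumes "0 < c"
  shows "convex_on {0..} (\<lambda>x. x * ln (x / c))"
proof (rule convex_onI)
  fix t x y :: real assume t: "0 < t" "t < 1" and xy: "x \<in> {0..}" "y \<in> {0..}"
  define z where "z = (1 - t) * x + t * y"
  show "((1 - t) *\<^sub>R x + t *\<^sub>R y) * ln (((1 - t) *\<^sub>R x + t *\<^sub>R y) / c)
        \<le> (1 - t) * (x * ln (x / c)) + t * (y * ln (y / c))"
  proof (cases "z = 0")
    case True
    then have "x = 0" "y = 0" using t xy unfolding z_def by (auto simp: add_nonneg_eq_0_iff)
    then show ?thesis by simp
  next
    case False
    then have z: "0 < z" using t xy unfolding z_def by (simp add: add_nonneg_nonneg order_le_neq_trans)
    have split: "a * ln (a / c) = a * ln (a / z) + a * ln (z / c)" if "0 \<le> a" for a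
      using that z assms by (cases "a = 0") (auto simp: ln_div algebra_simps)
    have "0 \<le> (1 - t) * (x * ln (x / z)) + t * (y * ln (y / z))"
    proof -
      have "0 = (1 - t) * (x - z) + t * (y - z)" unfolding z_def by (simp add: algebra_simps)
      also have "\<dots> \<le> (1 - t) * (x * ln (x / z)) + t * (y * ln (y / z))"
        using diff_le_mult_ln_div[of x z] diff_le_mult_ln_div[of y z] t xy z
        by (intro add_mono mult_left_mono) auto
      finally show ?thesis .
    qed
    then have "z * ln (z / c) \<le> (1 - t) * (x * ln (x / z)) + t * (y * ln (y / z)) + z * ln (z / c)"
      by simp
    also have "\<dots> = (1 - t) * (x * ln (x / c)) + t * (y * ln (y / c))"
      using xy by (simp add: split[of x] split[of y] algebra_simps z_def)
    finally show ?thesis unfolding z_def by simp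
  qed
qed simp

lemma convex_on_poisson_kl: "0 < c \<Longrightarrow> convex_on {0..} (poisson_kl c)"
proof -
  assume "0 < c"
  have "convex_on {0..} (\<lambda>x. x * ln (x / c) + (c - x))"
    using convex_on_mult_ln_div[OF \<open>0 < c\<close>]
    by (intro convex_on_add convex_on_diff) (auto simp: convex_on_const concave_on_ident)
  then show ?thesis unfolding poisson_kl_def by (simp add: algebra_simps)
qed

lemma continuous_on_mult_ln: "continuous_on {0..} (\<lambda>x::real. x * ln x)"
proof (rule continuous_on_eq_continuous_within[THEN iffD2], intro ballI)
  fix x :: real assume "x \<in> {0..}"
  show "continuous (at x within {0..}) (\<lambda>x. x * ln x)"
  proof (cases "x = 0")
    case True
    have "((\<lambda>x::real. x * ln x) \<longlongrightarrow> 0) (at_right 0)" by real_asymp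
    then show ?thesis using True by (simp add: continuous_within at_within_Ici_at_right)
  next
    case False
    then show ?thesis using \<open>x \<in> {0..}\<close> by (intro continuous_intros) auto
  qed
qed

lemma tendsto_poisson_kl:
  assumes c: "(c \<longlongrightarrow> c0) F" "0 < c0" and l: "(l \<longlongrightarrow> l0) F" "0 \<le> l0" "\<forall>\<^sub>F q in F. 0 \<le> l q"
  shows "((\<lambda>q. poisson_kl (c q) (l q)) \<longlongrightarrow> poisson_kl c0 l0) F"
proof -
  have expand: "poisson_kl a x = x * ln x - x * ln a - x + a" if "0 \<le> x" "0 < a" for a x
    using that by (cases "x = 0") (simp_all add: poisson_kl_def ln_div algebra_simps)
  have mult_ln: "((\<lambda>q. l q * ln (l q)) \<longlongrightarrow> l0 * ln l0) F"
    using continuous_on_tendsto_compose[OF continuous_on_mult_ln l(1)] l(2,3) by simp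
  have "((\<lambda>q. l q * ln (l q) - l q * ln (c q) - l q + c q) \<longlongrightarrow> poisson_kl c0 l0) F"
    unfolding expand[OF l(2) c(2)] using c(2)
    by (intro tendsto_add tendsto_diff mult_ln tendsto_mult tendsto_ln l(1) c(1)) auto
  moreover have "\<forall>\<^sub>F q in F. l q * ln (l q) - l q * ln (c q) - l q + c q = poisson_kl (c q) (l q)"
    using l(3) order_tendstoD(1)[OF c] by eventually_elim (simp add: expand)
  ultimately show ?thesis by (rule Lim_transform_eventually)
qed

lemma eventually_gt_neg_mult_ln:
  fixes l D :: "'a \<Rightarrow> real"
  assumes "(l \<longlongrightarrow> l0) F" "0 < l0" "(D \<longlongrightarrow> 0) F"
  shows "\<forall>\<^sub>F q in F. 0 < D q \<longrightarrow> r < - l q / 2 * ln (D q)"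
proof -
  define K where "K = 4 * \<bar>r\<bar> / l0 + 1"
  have "0 < K" unfolding K_def using assms(2) by (simp add: add_nonneg_pos)
  have "\<forall>\<^sub>F q in F. l0 / 2 < l q" using assms(1,2) by (intro order_tendstoD(1)) auto
  moreover have "\<forall>\<^sub>F q in F. D q < exp (- K)" using assms(3) by (intro order_tendstoD(2)) auto
  ultimately show ?thesis
  proof eventually_elim
    case (elim q)
    show ?case
    proof
      assume "0 < D q"
      then have "K < - ln (D q)" using elim by (simp add: ln_less_cancel_iff[symmetric] less_minus_iff)
      then have "l0 / 4 * K < l q / 2 * (- ln (D q))"
        using elim \<open>0 < K\<close> assms(2) by (intro mult_strict_mono) auto
      moreover have "l0 / 4 * K = \<bar>r\<bar> + l0 / 4" unfolding K_def using assms(2) by (simp add: field_simps)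
      ultimately show "r < - l q / 2 * ln (D q)" using assms(2) by simp
    qed
  qed
qed

section \<open>Spectral theorem for symmetric matrices\<close>

lemma linear_coeff_eq_0:
  fixes a K :: real
  assumes "\<And>t. t * a \<le> t\<^sup>2 * K"
  shows "a = 0"
proof (rule ccontr)
  assume "a \<noteq> 0"
  define t where "t = a / (\<bar>K\<bar> + 1)"
  have "a\<^sup>2 / (\<bar>K\<bar> + 1) = t * a" unfolding t_def by (simp add: power2_eq_square)
  also have "\<dots> \<le> t\<^sup>2 * \<bar>K\<bar>" using assms[of t] mult_left_mono[OF abs_ge_self zero_le_power2] by (rule order_trans)
  also have "\<dots> = a\<^sup>2 / (\<bar>K\<bar> + 1) * (\<bar>K\<bar> / (\<bar>K\<bar> + 1))" unfolding t_def by (simp add: power2_eq_square)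
  also have "\<dots> < a\<^sup>2 / (\<bar>K\<bar> + 1) * 1"
    using \<open>a \<noteq> 0\<close> by (intro mult_strict_left_mono) auto
  finally show False by simp
qed

lemma symmetric_inner_mult:
  fixes A :: "real^'n^'n"
  assumes "transpose A = A"
  shows "x \<bullet> (A *v y) = (A *v x) \<bullet> y"
  by (metis assms dot_lmul_matrix inner_commute transpose_matrix_vector)

lemma rayleigh_maximizer_eigenvector:
  fixes A :: "real^'n^'n"
  assumes sym: "transpose A = A" and V: "subspace V" and invariant: "\<And>x. x \<in> V \<Longrightarrow> A *v x \<in> V"
    and u: "u \<in> V" "norm u = 1"
    and max: "\<And>y. y \<in> V \<Longrightarrow> norm y = 1 \<Longrightarrow> y \<bullet> (A *v y) \<le> u \<bullet> (A *v u)"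
  shows "A *v u = (u \<bullet> (A *v u)) *\<^sub>R u"
proof -
  define m where "m = u \<bullet> (A *v u)"
  have max': "y \<bullet> (A *v y) \<le> m * (norm y)\<^sup>2" if "y \<in> V" for y
  proof (cases "y = 0")
    case False
    have "(y /\<^sub>R norm y) \<bullet> (A *v (y /\<^sub>R norm y)) \<le> m"
      using max[of "y /\<^sub>R norm y"] that False V unfolding m_def by (simp add: subspace_scale)
    then show ?thesis
      using False by (simp add: matrix_vector_mult_scaleR power2_eq_square field_simps)
  qed simp
  define w where "w = A *v u - m *\<^sub>R u"
  have "w \<in> V" unfolding w_def using V invariant u by (simp add: subspace_diff subspace_scale)
  have uu: "u \<bullet> u = 1" using u by (simp add: norm_eq_1)
  have "w \<bullet> u = (A *v u) \<bullet> u - m * (u \<bullet> u)" unfolding w_def by (simp add: inner_diff_left)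
  then have wu: "w \<bullet> u = 0" unfolding m_def uu by (simp add: inner_commute)
  have "w \<bullet> (A *v u) = w \<bullet> w"
    using wu unfolding w_def by (simp add: inner_diff_right inner_diff_left inner_commute)
  \<comment> \<open>Along the line \<open>u + t w\<close> the quadratic form stays below \<open>m |u + t w|\<^sup>2\<close>, with slope \<open>2 |w|\<^sup>2\<close> at \<open>t = 0\<close>.\<close>
  moreover have "(u + t *\<^sub>R w) \<bullet> (A *v (u + t *\<^sub>R w))
      = m + 2 * t * (w \<bullet> (A *v u)) + t\<^sup>2 * (w \<bullet> (A *v w))" for t
    using symmetric_inner_mult[OF sym, of u w]
    by (simp add: m_def matrix_vector_right_distrib matrix_vector_mult_scaleR inner_add_left
        inner_add_right inner_commute power2_eq_square algebra_simps)
  moreover have "(norm (u + t *\<^sub>R w))\<^sup>2 = 1 + t\<^sup>2 * (w \<bullet> w)" for t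
    unfolding power2_norm_eq_inner using uu wu
    by (simp add: inner_add_left inner_add_right inner_commute power2_eq_square algebra_simps)
  ultimately have "t * (2 * (w \<bullet> w)) \<le> t\<^sup>2 * (m * (w \<bullet> w) - w \<bullet> (A *v w))" for t
    using max'[of "u + t *\<^sub>R w"] V u \<open>w \<in> V\<close> by (simp add: subspace_add subspace_scale algebra_simps)
  then have "w = 0" using linear_coeff_eq_0 by fastforce
  then show ?thesis unfolding w_def m_def by simp
qed

lemma symmetric_invariant_subspace_eigenvector:
  fixes A :: "real^'n^'n"
  assumes sym: "transpose A = A" and V: "subspace V" "V \<noteq> {0}"
    and invariant: "\<And>x. x \<in> V \<Longrightarrow> A *v x \<in> V"
  obtains u where "u \<in> V" "norm u = 1" "A *v u = (u \<bullet> (A *v u)) *\<^sub>R u"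
proof -
  obtain v where v: "v \<in> V" "v \<noteq> 0" using V subspace_0 by blast
  define K where "K = V \<inter> sphere 0 1"
  have "compact K"
    unfolding K_def using closed_subspace[OF V(1)] by (simp add: closed_Int_compact)
  moreover have "v /\<^sub>R norm v \<in> K" unfolding K_def using v V(1) by (simp add: subspace_scale)
  ultimately obtain u where "u \<in> K" and "\<And>y. y \<in> K \<Longrightarrow> y \<bullet> (A *v y) \<le> u \<bullet> (A *v u)"
    using continuous_attains_sup[of K "\<lambda>y. y \<bullet> (A *v y)"] by (fastforce intro: continuous_intros)
  then show ?thesis
    using rayleigh_maximizer_eigenvector[OF sym V(1) invariant] that unfolding K_def by auto
qed

lemma span_insert_orthogonal_complement:
  assumes V: "subspace V" and u: "u \<in> V" "u \<bullet> u = 1" and U: "span U = V \<inter> {x. u \<bullet> x = 0}"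
  shows "span (insert u U) = V"
proof
  show "span (insert u U) \<subseteq> V"
    using U u V span_superset by (intro span_minimal) auto
  show "V \<subseteq> span (insert u U)"
  proof
    fix x assume "x \<in> V"
    then have "x - (u \<bullet> x) *\<^sub>R u \<in> span U"
      unfolding U using u V by (auto simp: subspace_diff subspace_scale inner_diff_right)
    then show "x \<in> span (insert u U)" using span_breakdown_eq by (metis scaleR_conv_of_real)
  qed
qed

lemma invariant_subspace_orthonormal_eigenbasis:
  fixes A :: "real^'n^'n"
  assumes sym: "transpose A = A" and "subspace V" and "\<And>x. x \<in> V \<Longrightarrow> A *v x \<in> V"
  shows "\<exists>U. U \<subseteq> V \<and> pairwise orthogonal U \<and> (\<forall>u\<in>U. norm u = 1) \<and>
           (\<forall>u\<in>U. \<exists>c. A *v u = c *\<^sub>R u) \<and> span U = V"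
  using assms(2,3)
proof (induction "dim V" arbitrary: V rule: less_induct)
  case less
  show ?case
  proof (cases "V = {0}")
    case True
    then show ?thesis by (intro exI[of _ "{}"]) auto
  next
    case False
    then obtain u where u: "u \<in> V" "norm u = 1" and Au: "A *v u = (u \<bullet> (A *v u)) *\<^sub>R u"
      using symmetric_invariant_subspace_eigenvector[OF sym less.prems(1) _ less.prems(2)] by blast
    then have uu: "u \<bullet> u = 1" by (simp add: norm_eq_1)
    define W where "W = V \<inter> {x. u \<bullet> x = 0}"
    have "subspace W" unfolding W_def using less.prems(1) subspace_hyperplane subspace_inter by blast
    moreover have "A *v x \<in> W" if "x \<in> W" for x
      using that less.prems(2) symmetric_inner_mult[OF sym, of u x] unfolding W_def by (subst (asm) Au) auto
    moreover have "dim W < dim V"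
    proof (rule dim_psubset)
      have "u \<notin> W" using uu unfolding W_def by simp
      then have "W \<subset> V" using u unfolding W_def by blast
      then show "span W \<subset> span V"
        using \<open>subspace W\<close> less.prems(1) by (simp add: span_eq_iff[THEN iffD2])
    qed
    ultimately obtain U where U: "U \<subseteq> W" "pairwise orthogonal U" "\<forall>u\<in>U. norm u = 1"
      "\<forall>u\<in>U. \<exists>c. A *v u = c *\<^sub>R u" "span U = W"
      using less.hyps by meson
    show ?thesis
    proof (intro exI[of _ "insert u U"] conjI)
      show "insert u U \<subseteq> V" "pairwise orthogonal (insert u U)"
        using U(1,2) u unfolding W_def pairwise_insert by (auto simp: orthogonal_def inner_commute)
      show "\<forall>u\<in>insert u U. norm u = 1" "\<forall>v\<in>insert u U. \<exists>c. A *v v = c *\<^sub>R v"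
        using U(3,4) u(2) Au by auto
      show "span (insert u U) = V"
        using span_insert_orthogonal_complement[OF less.prems(1) u(1) uu] U(5) unfolding W_def .
    qed
  qed
qed

definition diag_matrix :: "real^'n \<Rightarrow> real^'n^'n" where
  "diag_matrix d = (\<chi> i j. if i = j then d$i else 0)"

lemma matrix_mult_diag_matrix: "(Q ** diag_matrix d) $ i $ j = Q $ i $ j * d $ j"
  unfolding diag_matrix_def matrix_matrix_mult_def
  by (simp add: if_distrib[of "\<lambda>x. _ * x"] sum.delta' cong: if_cong)

lemma diag_matrix_mult: "diag_matrix a ** diag_matrix b = diag_matrix (\<chi> i. a$i * b$i)"
  by (simp add: vec_eq_iff matrix_mult_diag_matrix) (simp add: diag_matrix_def)

lemma transpose_diag_matrix [simp]: "transpose (diag_matrix d) = diag_matrix d"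
  by (simp add: transpose_def diag_matrix_def vec_eq_iff)

lemma det_diag_matrix: "det (diag_matrix d) = (\<Prod>i\<in>UNIV. d $ i)"
  by (subst det_diagonal) (auto simp: diag_matrix_def)

lemma trace_diag_matrix: "trace (diag_matrix d) = (\<Sum>i\<in>UNIV. d $ i)"
  by (simp add: trace_def diag_matrix_def)

theorem symmetric_matrix_spectral:
  fixes A :: "real^'n^'n"
  assumes sym: "transpose A = A"
  obtains Q d where "orthogonal_matrix Q" "A = Q ** diag_matrix d ** transpose Q"
proof -
  obtain U where U: "pairwise orthogonal U" "\<forall>u\<in>U. norm u = 1"
      "\<forall>u\<in>U. \<exists>c. A *v u = c *\<^sub>R u" "span U = UNIV"
    using invariant_subspace_orthonormal_eigenbasis[OF sym, of UNIV] by auto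
  have "independent U" using U(1,2) pairwise_orthogonal_independent by force
  then have "finite U" "card U = CARD('n)"
    using independent_imp_finite dim_eq_card_independent[of U] dim_span[of U] U(4) by auto
  then obtain f where f: "bij_betw f (UNIV::'n set) U"
    using finite_same_card_bij[of "UNIV::'n set" U] by auto
  then have fU: "f j \<in> U" for j by (auto simp: bij_betw_def)
  from U(3) obtain c where c: "\<And>u. u \<in> U \<Longrightarrow> A *v u = c u *\<^sub>R u" by metis
  define Q :: "real^'n^'n" where "Q = (\<chi> i j. f j $ i)"
  have colQ: "column j Q = f j" for j unfolding Q_def column_def by (simp add: vec_eq_iff)
  have Q: "orthogonal_matrix Q"
    unfolding orthogonal_matrix_orthonormal_columns colQ
    using fU U(1,2) f by (auto simp: pairwise_def bij_betw_def inj_on_def) blast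
  have "(A ** Q) $ i $ j = (A *v f j) $ i" for i j
    unfolding Q_def matrix_matrix_mult_def matrix_vector_mult_def by simp
  then have "A ** Q = Q ** diag_matrix (\<chi> j. c (f j))"
    using c[OF fU] by (simp add: vec_eq_iff matrix_mult_diag_matrix Q_def mult.commute)
  then have "A = Q ** diag_matrix (\<chi> j. c (f j)) ** transpose Q"
    using Q by (metis matrix_mul_assoc matrix_mul_rid orthogonal_matrix_def)
  then show ?thesis using that Q by blast
qed

lemma orthogonal_matrix_det_sq: "orthogonal_matrix (Q::real^'n^'n) \<Longrightarrow> det Q * det Q = 1"
  using det_orthogonal_matrix by fastforce

lemma orthogonal_matrix_invertible: "orthogonal_matrix Q \<Longrightarrow> invertible Q"
  unfolding orthogonal_matrix_def invertible_def by blast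

lemma det_orthogonal_conj:
  "orthogonal_matrix (Q::real^'n^'n) \<Longrightarrow> det (Q ** D ** transpose Q) = det D"
  using orthogonal_matrix_det_sq[of Q] by (simp add: det_mul)

lemma trace_orthogonal_conj:
  "orthogonal_matrix (Q::real^'n^'n) \<Longrightarrow> trace (Q ** D ** transpose Q) = trace D"
  by (metis matrix_mul_assoc matrix_mul_lid orthogonal_matrix_def trace_mul_sym)

lemma column_matrix_mult: "column j (A ** B) = A *v column j (B::real^'n^'n)"
  by (simp add: vec_eq_iff matrix_matrix_mult_def matrix_vector_mult_def column_def)

lemma spectral_eigenvalue:
  assumes Q: "orthogonal_matrix (Q::real^'n^'n)" and A: "A = Q ** diag_matrix d ** transpose Q"
  shows "column j Q \<bullet> (A *v column j Q) = d $ j"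
proof -
  have "A ** Q = Q ** diag_matrix d"
    using Q unfolding A by (simp add: orthogonal_matrix_def flip: matrix_mul_assoc)
  then have "A *v column j Q = column j (Q ** diag_matrix d)"
    by (simp flip: column_matrix_mult)
  also have "\<dots> = d $ j *\<^sub>R column j Q"
    by (simp add: vec_eq_iff column_def matrix_mult_diag_matrix mult.commute)
  finally have "A *v column j Q = d $ j *\<^sub>R column j Q" .
  then show ?thesis using Q by (simp add: orthogonal_matrix_orthonormal_columns norm_eq_1)
qed

lemma psd_spectral:
  assumes "psd A"
  obtains Q d where "orthogonal_matrix Q" "A = Q ** diag_matrix d ** transpose Q" "\<And>j. 0 \<le> d $ j"
proof -
  obtain Q d where Qd: "orthogonal_matrix Q" "A = Q ** diag_matrix d ** transpose Q"
    using symmetric_matrix_spectral assms unfolding psd_def by blast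
  moreover have "0 \<le> d $ j" for j using spectral_eigenvalue[OF Qd, of j] assms unfolding psd_def by metis
  ultimately show ?thesis using that by blast
qed

lemma pd_spectral:
  assumes "pd A"
  obtains Q d where "orthogonal_matrix Q" "A = Q ** diag_matrix d ** transpose Q" "\<And>j. 0 < d $ j"
proof -
  obtain Q d where Qd: "orthogonal_matrix Q" "A = Q ** diag_matrix d ** transpose Q"
    using symmetric_matrix_spectral assms unfolding pd_def by blast
  moreover have "0 < d $ j" for j
  proof -
    have "column j Q \<noteq> 0"
      using Qd(1) unfolding orthogonal_matrix_orthonormal_columns by (metis norm_zero zero_neq_one)
    then show ?thesis using spectral_eigenvalue[OF Qd, of j] assms unfolding pd_def by metis
  qed
  ultimately show ?thesis using that by blast
qed

section \<open>Positive definite matrices\<close>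

lemma pd_imp_psd: "pd A \<Longrightarrow> psd A"
  unfolding pd_def psd_def by (metis inner_zero_left matrix_vector_mult_0_right order_le_less)

lemma pd_nonzero: "pd (S::real^'n^'n) \<Longrightarrow> S \<noteq> 0"
  unfolding pd_def by (metis axis_eq_0_iff inner_zero_right less_irrefl matrix_vector_mult_0 zero_neq_one)

lemma pd_det_pos: "pd A \<Longrightarrow> 0 < det A"
  by (elim pd_spectral) (simp add: det_orthogonal_conj det_diag_matrix prod_pos)

lemma pd_diag_matrix:
  assumes "\<And>i. 0 < d $ i"
  shows "pd (diag_matrix d)"
proof -
  have "v \<bullet> (diag_matrix d *v v) = (\<Sum>i\<in>UNIV. d $ i * (v $ i)\<^sup>2)" for v
    by (simp add: inner_vec_def matrix_vector_mult_def diag_matrix_def if_distrib[of "\<lambda>x. _ * x"]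
        sum.delta power2_eq_square mult_ac cong: if_cong)
  moreover have "0 < (\<Sum>i\<in>UNIV. d $ i * (v $ i)\<^sup>2)" if "v \<noteq> 0" for v
  proof -
    obtain k where "v $ k \<noteq> 0" using \<open>v \<noteq> 0\<close> by (auto simp: vec_eq_iff)
    then show ?thesis using assms by (intro sum_pos2[of _ k]) (simp_all add: less_imp_le)
  qed
  ultimately show ?thesis unfolding pd_def by simp
qed

lemma pd_congruence:
  assumes "pd B" "invertible R"
  shows "pd (transpose R ** B ** R)"
proof -
  have "transpose (transpose R ** B ** R) = transpose R ** B ** R"
    using assms(1) by (simp add: pd_def matrix_transpose_mul matrix_mul_assoc)
  moreover have "0 < v \<bullet> ((transpose R ** B ** R) *v v)" if "v \<noteq> 0" for v
  proof -
    have "R *v v \<noteq> 0"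
      using inj_matrix_vector_mult[OF assms(2)] that by (metis injD matrix_vector_mult_0_right)
    then have "0 < (R *v v) \<bullet> (B *v (R *v v))" using assms(1) unfolding pd_def by blast
    also have "\<dots> = v \<bullet> ((transpose R ** B ** R) *v v)"
      by (metis dot_lmul_matrix vector_transpose_matrix matrix_vector_mul_assoc)
    finally show ?thesis .
  qed
  ultimately show ?thesis unfolding pd_def by blast
qed

lemma psd_det_nonzero_imp_pd:
  assumes "psd A" "det A \<noteq> 0"
  shows "pd A"
proof -
  obtain Q d where Q: "orthogonal_matrix Q" and A: "A = Q ** diag_matrix d ** transpose Q"
    and d: "\<And>j. 0 \<le> d $ j"
    using psd_spectral[OF assms(1)] by blast
  have "(\<Prod>i\<in>UNIV. d $ i) \<noteq> 0"
    using assms(2) unfolding A det_orthogonal_conj[OF Q] det_diag_matrix .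
  then have "0 < d $ j" for j
    using d[of j] by (simp add: less_eq_real_def)
  then show ?thesis
    using pd_congruence[OF pd_diag_matrix orthogonal_matrix_invertible[of "transpose Q"]] Q
    unfolding A by simp
qed

lemma pd_factor:
  fixes S :: "real^'n^'n"
  assumes "pd S"
  obtains R :: "real^'n^'n" where "invertible R" "S = R ** transpose R"
proof -
  obtain Q d where Q: "orthogonal_matrix Q" and S: "S = Q ** diag_matrix d ** transpose Q"
    and d: "\<And>j. 0 < d $ j"
    using pd_spectral[OF assms] by blast
  define R where "R = Q ** diag_matrix (\<chi> i. sqrt (d $ i))"
  have "R ** transpose R = Q ** (diag_matrix (\<chi> i. sqrt (d $ i)) ** diag_matrix (\<chi> i. sqrt (d $ i))) ** transpose Q"
    unfolding R_def by (simp add: matrix_transpose_mul matrix_mul_assoc)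
  also have "\<dots> = S"
    unfolding S diag_matrix_mult using d by (simp add: less_imp_le)
  finally have "S = R ** transpose R" ..
  moreover have "det R \<noteq> 0"
    using d orthogonal_matrix_det_sq[OF Q] unfolding R_def
    by (auto simp: det_mul det_diag_matrix prod_zero_iff) (metis d less_irrefl)
  ultimately show ?thesis using that[of R] by (simp add: invertible_det_nz)
qed

lemma transpose_add: "transpose (A + B) = transpose A + transpose B"
  by (simp add: transpose_def vec_eq_iff)

lemma pd_scaleR: "pd A \<Longrightarrow> 0 < c \<Longrightarrow> pd (c *\<^sub>R A)"
  unfolding pd_def by (simp add: transpose_scalar flip: scaleR_matrix_vector_assoc)

lemma convex_pd: "convex {A::real^'n^'n. pd A}"
proof (rule convexI, clarify)
  fix A B :: "real^'n^'n" and u v :: real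
  assume "pd A" "pd B" "0 \<le> u" "0 \<le> v" "u + v = 1"
  have "0 < u * (x \<bullet> (A *v x)) + v * (x \<bullet> (B *v x))" if "x \<noteq> 0" for x
  proof -
    have "0 < x \<bullet> (A *v x)" "0 < x \<bullet> (B *v x)" using \<open>pd A\<close> \<open>pd B\<close> that unfolding pd_def by auto
    then show ?thesis using \<open>0 \<le> u\<close> \<open>0 \<le> v\<close> \<open>u + v = 1\<close>
      by (cases "u = 0") (auto intro!: add_pos_nonneg)
  qed
  then show "pd (u *\<^sub>R A + v *\<^sub>R B)"
    using \<open>pd A\<close> \<open>pd B\<close> unfolding pd_def
    by (simp add: transpose_add transpose_scalar matrix_vector_mult_add_rdistrib inner_add_right
        flip: scaleR_matrix_vector_assoc)
qed

lemma matrix_inv_right: "invertible A \<Longrightarrow> A ** matrix_inv A = mat 1"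
  and matrix_inv_left: "invertible A \<Longrightarrow> matrix_inv A ** A = mat 1"
  unfolding invertible_def matrix_inv_def by (metis (mono_tags, lifting) someI_ex)+

lemma matrix_inv_unique:
  assumes "(A::real^'n^'n) ** B = mat 1"
  shows "matrix_inv A = B"
proof -
  have "invertible A" using assms invertible_right_inverse by blast
  then have "matrix_inv A = matrix_inv A ** (A ** B)" using assms by simp
  also have "\<dots> = B" using matrix_inv_left[OF \<open>invertible A\<close>] by (simp add: matrix_mul_assoc)
  finally show ?thesis .
qed

lemma pd_matrix_inv:
  assumes "pd A"
  shows "pd (matrix_inv A)"
proof -
  have inv: "invertible A" using pd_det_pos[OF assms] invertible_det_nz by force
  have sym: "transpose A = A" using assms unfolding pd_def by blast
  have "A ** transpose (matrix_inv A) = mat 1"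
    using arg_cong[OF matrix_inv_left[OF inv], of transpose] sym by (simp add: matrix_transpose_mul)
  then have "transpose (matrix_inv A) = matrix_inv A"
    using matrix_inv_unique by metis
  moreover have "0 < v \<bullet> (matrix_inv A *v v)" if "v \<noteq> 0" for v
  proof -
    define w where "w = matrix_inv A *v v"
    have v: "v = A *v w" unfolding w_def by (simp add: matrix_vector_mul_assoc matrix_inv_right[OF inv])
    then have "0 < w \<bullet> (A *v w)"
      using assms that unfolding pd_def by (metis matrix_vector_mult_0_right)
    then show ?thesis using v unfolding w_def by (simp add: inner_commute)
  qed
  ultimately show ?thesis unfolding pd_def by blast
qed

lemma matrix_add_rdistrib: "(A + B) ** C = A ** C + B ** (C::real^'p^'n)"
  by (simp add: vec_eq_iff matrix_matrix_mult_def sum.distrib algebra_simps)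

lemma pd_simultaneous_diag:
  fixes X Y :: "real^'n^'n"
  assumes "pd X" "pd Y"
  obtains M :: "real^'n^'n" and e
  where "invertible M" "X = M ** transpose M" "Y = M ** diag_matrix e ** transpose M" "\<And>i. 0 < e $ i"
proof -
  obtain R :: "real^'n^'n" where R: "invertible R" "X = R ** transpose R"
    using pd_factor[OF assms(1)] by blast
  define Ri where "Ri = matrix_inv R"
  have RRi: "R ** Ri = mat 1" unfolding Ri_def by (rule matrix_inv_right[OF R(1)])
  have "invertible (transpose Ri)"
    using RRi by (metis invertible_left_inverse matrix_transpose_mul transpose_invertible transpose_mat)
  then have "pd (Ri ** Y ** transpose Ri)"
    using pd_congruence[OF assms(2)] by fastforce
  then obtain P e where P: "orthogonal_matrix P" "Ri ** Y ** transpose Ri = P ** diag_matrix e ** transpose P"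
    and e: "\<And>i. 0 < e $ i"
    by (rule pd_spectral) blast
  define M where "M = R ** P"
  have "invertible M" unfolding M_def using R(1) P(1) orthogonal_matrix_invertible invertible_mult by blast
  moreover have "X = M ** transpose M"
    using R(2) P(1) unfolding M_def orthogonal_matrix_def
    by (simp add: matrix_transpose_mul matrix_mul_assoc) (metis matrix_mul_assoc matrix_mul_rid)
  moreover have "Y = M ** diag_matrix e ** transpose M"
  proof -
    have "transpose Ri ** transpose R = mat 1"
      using RRi by (metis matrix_transpose_mul transpose_mat)
    then have "Y = R ** (Ri ** Y ** transpose Ri) ** transpose R"
      using RRi by (simp add: matrix_mul_assoc flip: matrix_mul_assoc[of _ "transpose Ri"])
    then show ?thesis unfolding P(2) M_def by (simp add: matrix_transpose_mul matrix_mul_assoc)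
  qed
  ultimately show ?thesis using that e by blast
qed

lemma concave_on_ln_det: "concave_on {X::real^'n^'n. pd X} (\<lambda>X. ln (det X))"
  unfolding concave_on_iff
proof (intro conjI convex_pd ballI allI impI, clarsimp)
  fix X Y :: "real^'n^'n" and u v :: real
  assume "pd X" "pd Y" "0 \<le> u" "0 \<le> v" "u + v = 1"
  then obtain M :: "real^'n^'n" and e where M: "invertible M" "X = M ** transpose M"
      "Y = M ** diag_matrix e ** transpose M" and e: "\<And>i. 0 < e $ i"
    using pd_simultaneous_diag by metis
  define r where "r = det M * det M"
  have "0 < r" unfolding r_def using M(1) invertible_det_nz[of M] by (auto simp: zero_less_mult_iff linorder_neq_iff)
  define f where "f = (\<chi> i. u + v * e $ i)"
  have f: "0 < f $ i" for i
    unfolding f_def using e[of i] \<open>0 \<le> u\<close> \<open>0 \<le> v\<close> \<open>u + v = 1\<close>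
    by (cases "v = 0") (auto intro: add_nonneg_pos)
  have "u *\<^sub>R X + v *\<^sub>R Y = M ** (u *\<^sub>R mat 1 + v *\<^sub>R diag_matrix e) ** transpose M"
    unfolding M(2,3)
    by (simp add: matrix_add_ldistrib matrix_add_rdistrib matrix_scalar_ac flip: scalar_matrix_assoc)
  also have "u *\<^sub>R mat 1 + v *\<^sub>R diag_matrix e = diag_matrix f"
    by (simp add: diag_matrix_def f_def mat_def vec_eq_iff)
  finally have "det (u *\<^sub>R X + v *\<^sub>R Y) = r * (\<Prod>i\<in>UNIV. f $ i)"
    by (simp add: r_def det_mul det_diag_matrix)
  then have "ln (det (u *\<^sub>R X + v *\<^sub>R Y)) = ln r + (\<Sum>i\<in>UNIV. ln (f $ i))"
    using \<open>0 < r\<close> f by (simp add: ln_mult_pos prod_pos ln_prod less_imp_neq[symmetric])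
  moreover have "det X = r" "det Y = r * (\<Prod>i\<in>UNIV. e $ i)"
    unfolding M(2,3) r_def by (simp_all add: det_mul det_diag_matrix)
  then have "u * ln (det X) + v * ln (det Y) = ln r + v * (\<Sum>i\<in>UNIV. ln (e $ i))"
    using \<open>0 < r\<close> e \<open>u + v = 1\<close>
    by (simp add: ln_mult_pos prod_pos ln_prod less_imp_neq[symmetric] algebra_simps)
      (metis distrib_right mult_1)
  moreover have "v * ln (e $ i) \<le> ln (f $ i)" for i
    using concave_onD[OF ln_concave, of v 1 "e $ i"] e[of i] \<open>0 \<le> v\<close> \<open>0 \<le> u\<close> \<open>u + v = 1\<close>
    by (simp add: f_def eq_diff_eq[symmetric])
  then have "v * (\<Sum>i\<in>UNIV. ln (e $ i)) \<le> (\<Sum>i\<in>UNIV. ln (f $ i))"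
    by (simp add: sum_distrib_left sum_mono)
  ultimately show "u * ln (det X) + v * ln (det Y) \<le> ln (det (u *\<^sub>R X + v *\<^sub>R Y))"
    by simp
qed

lemma ln_det_le_trace:
  fixes C :: "real^'n^'n"
  assumes "pd C"
  shows "ln (det C) \<le> real CARD('n) * ln (trace C / real CARD('n))"
proof -
  obtain Q d where Q: "orthogonal_matrix Q" and C: "C = Q ** diag_matrix d ** transpose Q"
    and d: "\<And>j. 0 < d $ j"
    using pd_spectral[OF assms] by blast
  have "ln (det C) = (\<Sum>i\<in>UNIV. ln (d $ i))"
    unfolding C det_orthogonal_conj[OF Q] det_diag_matrix using d by (simp add: ln_prod less_imp_neq[symmetric])
  also have "\<dots> = real CARD('n) * (\<Sum>i\<in>UNIV. (1 / real CARD('n)) * ln (d $ i))"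
    by (simp add: sum_distrib_left)
  also have "(\<Sum>i\<in>UNIV. (1 / real CARD('n)) * ln (d $ i)) \<le> ln (\<Sum>i\<in>UNIV. (1 / real CARD('n)) *\<^sub>R d $ i)"
    using d by (intro concave_on_sum[OF _ _ ln_concave]) auto
  also have "(\<Sum>i\<in>UNIV. (1 / real CARD('n)) *\<^sub>R d $ i) = trace C / real CARD('n)"
    unfolding C trace_orthogonal_conj[OF Q] trace_diag_matrix by (simp add: sum_divide_distrib)
  finally show ?thesis by (simp add: mult_left_mono)
qed

lemma transpose_mult_entry: "(transpose A ** N) $ i $ j = column i A \<bullet> column j (N::real^'n^'n)"
  by (simp add: matrix_matrix_mult_def transpose_def column_def inner_vec_def mult.commute)

lemma trace_scaleR: "trace (c *\<^sub>R A) = c * trace (A::real^'n^'n)"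
  by (simp add: trace_def sum_distrib_left)

lemma det_scaleR: "det (c *\<^sub>R (A::real^'n^'n)) = c ^ CARD('n) * det A"
proof -
  have "c *\<^sub>R A = mat c ** A"
    by (simp add: vec_eq_iff matrix_matrix_mult_def mat_def if_distrib[of "\<lambda>x. x * _"] sum.delta cong: if_cong)
  moreover have "det (mat c :: real^'n^'n) = c ^ CARD('n)"
    by (subst det_diagonal) (auto simp: mat_def)
  ultimately show ?thesis by (simp add: det_mul)
qed

lemma trace_mult_psd_pos:
  assumes "pd B" "psd S" "S \<noteq> 0"
  shows "0 < trace (B ** S)"
proof -
  obtain Q d where Q: "orthogonal_matrix Q" and S: "S = Q ** diag_matrix d ** transpose Q"
    and d: "\<And>j. 0 \<le> d $ j"
    using psd_spectral[OF assms(2)] by blast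
  define M where "M = transpose Q ** B ** Q"
  have "trace (B ** S) = trace (transpose Q ** (B ** Q ** diag_matrix d))"
    unfolding S by (metis matrix_mul_assoc trace_mul_sym)
  also have "\<dots> = (\<Sum>i\<in>UNIV. M $ i $ i * d $ i)"
    unfolding M_def by (simp add: trace_def matrix_mult_diag_matrix matrix_mul_assoc)
  finally have tr: "trace (B ** S) = (\<Sum>i\<in>UNIV. M $ i $ i * d $ i)" .
  have M: "0 < M $ i $ i" for i
  proof -
    have "M $ i $ i = column i Q \<bullet> (B *v column i Q)"
      unfolding M_def matrix_mul_assoc[symmetric] transpose_mult_entry column_matrix_mult ..
    moreover have "column i Q \<noteq> 0"
      using Q unfolding orthogonal_matrix_orthonormal_columns by (metis norm_zero zero_neq_one)
    ultimately show ?thesis using assms(1) unfolding pd_def by auto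
  qed
  have "diag_matrix d \<noteq> 0" using assms(3) unfolding S by auto
  then obtain k where "d $ k \<noteq> 0" by (auto simp: diag_matrix_def vec_eq_iff split: if_splits)
  then have "0 < M $ k $ k * d $ k" using M[of k] d[of k] by simp
  then show ?thesis unfolding tr using M d by (intro sum_pos2[of _ k]) (simp_all add: less_imp_le)
qed

lemma tendsto_det [tendsto_intros]:
  "(M \<longlongrightarrow> A) F \<Longrightarrow> ((\<lambda>q. det (M q)) \<longlongrightarrow> det (A::real^'n^'n)) F"
  unfolding det_def by (intro tendsto_intros)

lemma tendsto_matrix_mult [tendsto_intros]:
  "(M \<longlongrightarrow> A) F \<Longrightarrow> (N \<longlongrightarrow> C) F \<Longrightarrow> ((\<lambda>q. M q ** N q) \<longlongrightarrow> A ** (C::real^'n^'n)) F"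
  unfolding matrix_matrix_mult_def by (intro tendsto_intros)

lemma matrix_inv_cramer:
  fixes A :: "real^'n^'n"
  assumes "det A \<noteq> 0"
  shows "matrix_inv A = (\<chi> k j. det (\<chi> i j'. if j' = k then axis j 1 $ i else A $ i $ j') / det A)"
proof -
  have inv: "invertible A" using assms invertible_det_nz by blast
  have "A *v (matrix_inv A *v axis j 1) = axis j 1" for j
    by (simp add: matrix_vector_mul_assoc matrix_inv_right[OF inv])
  then have "matrix_inv A *v axis j 1 = (\<chi> k. det (\<chi> i j'. if j' = k then axis j 1 $ i else A $ i $ j') / det A)"
    for j using cramer[OF assms] by blast
  moreover have "(M *v axis j 1) $ k = M $ k $ j" for M :: "real^'n^'n" and j k
    by (simp add: matrix_vector_mult_def axis_def if_distrib[of "\<lambda>x. _ * x"] cong: if_cong)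
  ultimately show ?thesis by (simp add: vec_eq_iff)
qed

lemma tendsto_matrix_inv:
  fixes M :: "'a \<Rightarrow> real^'n^'n"
  assumes M: "(M \<longlongrightarrow> A) F" and "det A \<noteq> 0"
  shows "((\<lambda>q. matrix_inv (M q)) \<longlongrightarrow> matrix_inv A) F"
proof -
  have [tendsto_intros]: "((\<lambda>q. if j' = k then axis j 1 $ i else M q $ i $ j') \<longlongrightarrow>
      (if j' = k then axis j 1 $ i else A $ i $ j')) F" for i j j' k
    by (cases "j' = k") (auto intro!: tendsto_vec_nth M)
  have "((\<lambda>q. \<chi> k j. det (\<chi> i j'. if j' = k then axis j 1 $ i else M q $ i $ j') / det (M q))
      \<longlongrightarrow> matrix_inv A) F"
    unfolding matrix_inv_cramer[OF \<open>det A \<noteq> 0\<close>] using \<open>det A \<noteq> 0\<close> by (intro tendsto_intros M)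
  moreover have "\<forall>\<^sub>F q in F. det (M q) \<noteq> 0"
    using tendsto_det[OF M] \<open>det A \<noteq> 0\<close> by (rule tendsto_imp_eventually_ne)
  then have "\<forall>\<^sub>F q in F. (\<chi> k j. det (\<chi> i j'. if j' = k then axis j 1 $ i else M q $ i $ j') / det (M q))
      = matrix_inv (M q)"
    by eventually_elim (simp add: matrix_inv_cramer)
  ultimately show ?thesis by (rule Lim_transform_eventually)
qed

section \<open>The rate function\<close>

definition lam1 :: "real^'n^'n \<Rightarrow> real^'n^'n \<Rightarrow> real" where
  "lam1 B S = trace (B ** S) / real CARD('n)"

lemma lam1_scaleR: "lam1 B (c *\<^sub>R S) = c * lam1 B S"
  by (simp add: lam1_def matrix_scalar_ac trace_scaleR flip: scalar_matrix_assoc)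

lemma linear_lam1: "linear (lam1 B)"
  by (rule linearI)
    (simp_all add: lam1_def matrix_add_ldistrib trace_add add_divide_distrib lam1_scaleR[unfolded lam1_def])

lemma lam1_zero [simp]: "lam1 B 0 = 0"
  by (simp add: lam1_def trace_def)

lemma lam1_pos: "pd B \<Longrightarrow> psd S \<Longrightarrow> S \<noteq> 0 \<Longrightarrow> 0 < lam1 B S"
  by (simp add: lam1_def trace_mult_psd_pos)

lemma lam1_nonneg: "pd B \<Longrightarrow> psd S \<Longrightarrow> 0 \<le> lam1 B S"
  using lam1_pos[of B S] by (cases "S = 0") auto

lemma tendsto_lam1 [tendsto_intros]:
  "(B \<longlongrightarrow> B0) F \<Longrightarrow> (S \<longlongrightarrow> S0) F \<Longrightarrow> ((\<lambda>q. lam1 (B q) (S q)) \<longlongrightarrow> lam1 B0 S0) F"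
  unfolding lam1_def trace_def by (intro tendsto_intros) simp_all

lemma ln_det_mult_le_lam1:
  fixes B S :: "real^'n^'n"
  assumes "pd B" "pd S"
  shows "ln (det (B ** S)) \<le> real CARD('n) * ln (lam1 B S)"
proof -
  obtain R :: "real^'n^'n" where R: "invertible R" "S = R ** transpose R"
    using pd_factor[OF assms(2)] by blast
  have "det (B ** S) = det (transpose R ** B ** R)" unfolding R(2) by (simp add: det_mul)
  moreover have "trace (B ** S) = trace (transpose R ** B ** R)"
    unfolding R(2) by (metis matrix_mul_assoc trace_mul_sym)
  ultimately show ?thesis
    using ln_det_le_trace[OF pd_congruence[OF assms(1) R(1)]] by (simp add: lam1_def)
qed

text \<open>\<open>\<lambda>\<^sub>1\<close> times the relative entropy of \<open>N(0, \<Sigma>\<^sub>1/\<lambda>\<^sub>1)\<close> with respect to \<open>N(0, B\<^sup>-\<^sup>1)\<close>.\<close>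
definition gauss_term :: "real^'n^'n \<Rightarrow> real^'n^'n \<Rightarrow> real" where
  "gauss_term B S = - lam1 B S / 2 * ln (det (B ** ((1 / lam1 B S) *\<^sub>R S)))"

lemma gauss_term_zero [simp]: "gauss_term B 0 = 0"
  by (simp add: gauss_term_def)

lemma gauss_term_nonneg:
  assumes "pd B" "pd S"
  shows "0 \<le> gauss_term B S"
proof -
  define l where "l = lam1 B S"
  have "0 < l" unfolding l_def using lam1_pos assms pd_imp_psd pd_nonzero by blast
  moreover have "lam1 B ((1 / l) *\<^sub>R S) = (1 / l) * lam1 B S" by (rule lam1_scaleR)
  ultimately have "pd ((1 / l) *\<^sub>R S)" "lam1 B ((1 / l) *\<^sub>R S) = 1"
    using pd_scaleR[OF assms(2)] unfolding l_def by simp_all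
  then have "ln (det (B ** ((1 / l) *\<^sub>R S))) \<le> 0"
    using ln_det_mult_le_lam1[OF assms(1)] by fastforce
  then show ?thesis unfolding gauss_term_def l_def[symmetric] using \<open>0 < l\<close>
    by (simp add: mult_nonneg_nonpos)
qed

lemma convex_on_gauss_term:
  assumes "pd B"
  shows "convex_on (insert 0 {S. pd S}) (gauss_term B)"
proof -
  have "concave_on {X. pd X} (\<lambda>X. ln (det B) + ln (det X))"
    by (rule concave_on_add[OF concave_on_const[THEN iffD2, OF convex_pd] concave_on_ln_det])
  then have "concave_on {X. pd X} (\<lambda>X. ln (det (B ** X)))"
    by (rule concave_on_cong[THEN iffD1, rotated]) (simp add: det_mul ln_mult_pos pd_det_pos assms)
  then have "convex_on {X. pd X} (\<lambda>X. - ln (det (B ** X)))"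
    by (simp add: concave_on_def)
  then have "convex_on {X. pd X} (\<lambda>X. - ln (det (B ** X)) / 2)"
    by (intro convex_on_cdiv) simp_all
  then have "convex_on (insert 0 {S. pd S}) (\<lambda>S. lam1 B S * (- ln (det (B ** (S /\<^sub>R lam1 B S))) / 2))"
    using lam1_pos[OF assms] pd_imp_psd pd_nonzero pd_scaleR
    by (intro convex_on_perspective linear_lam1 convex_pd) auto
  moreover have "gauss_term B = (\<lambda>S. lam1 B S * (- ln (det (B ** (S /\<^sub>R lam1 B S))) / 2))"
    by (simp add: fun_eq_iff gauss_term_def inverse_eq_divide)
  ultimately show ?thesis by simp
qed

text \<open>The finite branch also covers
  \<open>\<Sigma>\<^sub>1 = 0\<close>, where \<open>\<lambda>\<^sub>1 = 0\<close> and the formula reduces to \<open>\<lambda>\<^sub>2\<close>.\<close>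
definition ltr_core :: "real \<Rightarrow> real^'n^'n \<Rightarrow> real^'n^'n \<Rightarrow> ereal" where
  "ltr_core c B S =
     (if S = 0 \<or> pd S then ereal (poisson_kl c (lam1 B S) + gauss_term B S) else \<infinity>)"

lemma ltr_eq_ltr_core: "ltr lam2 Sig2 t x S = ltr_core (lam2 t x) (matrix_inv (Sig2 t x)) S"
  by (cases "S = 0")
    (simp_all add: ltr_def ltr_core_def gauss_term_def lam1_def poisson_kl_def Let_def trace_def)

lemma ltr_core_finite: "S = 0 \<or> pd S \<Longrightarrow> ltr_core c B S = ereal (poisson_kl c (lam1 B S) + gauss_term B S)"
  and ltr_core_infinite: "S \<noteq> 0 \<Longrightarrow> \<not> pd S \<Longrightarrow> ltr_core c B S = \<infinity>"
  by (auto simp: ltr_core_def)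

lemma ltr_core_zero: "ltr_core c B 0 = ereal c"
  by (simp add: ltr_core_def gauss_term_def lam1_def poisson_kl_def trace_def)

lemma ltr_core_ge_finite: "ereal (poisson_kl c (lam1 B S) + gauss_term B S) \<le> ltr_core c B S"
  by (simp add: ltr_core_def)

lemma ltr_core_ge_poisson_kl: "pd B \<Longrightarrow> ereal (poisson_kl c (lam1 B S)) \<le> ltr_core c B S"
  using gauss_term_nonneg[of B S] by (auto simp: ltr_core_def)

lemma ltr_core_nonneg:
  assumes "0 < c" "pd B" "psd S"
  shows "0 \<le> ltr_core c B S"
proof -
  consider "S = 0" | "pd S" | "S \<noteq> 0" "\<not> pd S" by blast
  then show ?thesis
  proof cases
    case 2
    then show ?thesis
      using poisson_kl_nonneg[OF lam1_nonneg[OF assms(2,3)] assms(1)] gauss_term_nonneg[OF assms(2)]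
      by (simp add: ltr_core_finite)
  qed (use assms in \<open>simp_all add: ltr_core_zero ltr_core_infinite\<close>)
qed

lemma convex_on_ltr_core_finite:
  fixes B :: "real^'n^'n"
  assumes "0 < c" "pd B"
  shows "convex_on (insert 0 {S. pd S}) (\<lambda>S. poisson_kl c (lam1 B S) + gauss_term B S)"
proof (rule convex_on_add)
  show "convex_on (insert 0 {S. pd S}) (gauss_term B)" by (rule convex_on_gauss_term[OF assms(2)])
  then have "convex (insert 0 {S::real^'n^'n. pd S})" by (rule convex_on_imp_convex)
  moreover have "lam1 B ` insert 0 {S. pd S} \<subseteq> {0..}"
    using lam1_nonneg[OF assms(2)] pd_imp_psd by auto
  ultimately show "convex_on (insert 0 {S. pd S}) (\<lambda>S. poisson_kl c (lam1 B S))"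
    using convex_on_linear_compose[OF linear_lam1 convex_on_poisson_kl[OF assms(1)]] by blast
qed

lemma ereal_convex_on_ltr_core:
  fixes B :: "real^'n^'n"
  assumes "0 < c" "pd B"
  shows "ereal_convex_on {S. psd S} (ltr_core c B)"
  unfolding ereal_convex_on_def
proof (intro ballI allI impI)
  fix a b :: "real^'n^'n" and \<mu> :: real
  assume ab: "a \<in> {S. psd S}" "b \<in> {S. psd S}" and \<mu>: "0 \<le> \<mu> \<and> \<mu> \<le> 1"
  let ?Z = "insert 0 {S. pd S}" and ?f = "ltr_core c B"
  show "?f (\<mu> *\<^sub>R a + (1 - \<mu>) *\<^sub>R b) \<le> ereal \<mu> * ?f a + ereal (1 - \<mu>) * ?f b"
  proof (cases "a \<in> ?Z \<and> b \<in> ?Z")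
    case True
    have "\<mu> *\<^sub>R a + (1 - \<mu>) *\<^sub>R b \<in> ?Z"
      using True \<mu> convexD[OF convex_on_imp_convex[OF convex_on_ltr_core_finite[OF assms]], of a b \<mu> "1 - \<mu>"]
      by simp
    then show ?thesis
      using True \<mu> convex_onD[OF convex_on_ltr_core_finite[OF assms], of "1 - \<mu>" a b]
      by (auto simp: ltr_core_finite)
  next
    case False
    have "0 \<le> ?f a" "0 \<le> ?f b" using ltr_core_nonneg[OF assms] ab by auto
    show ?thesis
    proof (cases "\<mu> = 0 \<or> \<mu> = 1")
      case True
      then show ?thesis by (auto simp: zero_ereal_def[symmetric] one_ereal_def[symmetric])
    next
      case False
      then have "ereal \<mu> * ?f a = \<infinity> \<or> ereal (1 - \<mu>) * ?f b = \<infinity>"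
        using \<open>\<not> (a \<in> ?Z \<and> b \<in> ?Z)\<close> \<mu> by (auto simp: ltr_core_infinite)
      moreover have "0 \<le> ereal \<mu> * ?f a" "0 \<le> ereal (1 - \<mu>) * ?f b"
        using \<open>0 \<le> ?f a\<close> \<open>0 \<le> ?f b\<close> \<mu> by simp_all
      ultimately have "ereal \<mu> * ?f a + ereal (1 - \<mu>) * ?f b = \<infinity>" by auto
      then show ?thesis by (metis ereal_less_eq(1))
    qed
  qed
qed

context
  fixes F :: "'a filter" and c :: "'a \<Rightarrow> real" and B S :: "'a \<Rightarrow> real^'n^'n"
    and c0 :: real and B0 S0 :: "real^'n^'n"
  assumes lim_c: "(c \<longlongrightarrow> c0) F" and lim_B: "(B \<longlongrightarrow> B0) F" and lim_S: "(S \<longlongrightarrow> S0) F"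
    and c0: "0 < c0" and B0: "pd B0" and S0: "psd S0"
    and admissible: "\<forall>\<^sub>F q in F. 0 < c q \<and> pd (B q) \<and> psd (S q)"
begin

lemma eventually_gt_ltr_core_at_zero:
  assumes "S0 = 0" "r < c0"
  shows "\<forall>\<^sub>F q in F. ereal r < ltr_core (c q) (B q) (S q)"
proof -
  have "((\<lambda>q. poisson_kl (c q) (lam1 (B q) (S q))) \<longlongrightarrow> poisson_kl c0 (lam1 B0 S0)) F"
    using admissible by (intro tendsto_poisson_kl lim_c c0 tendsto_lam1 lim_B lim_S)
      (auto simp: assms(1) elim!: eventually_mono intro: lam1_nonneg)
  moreover have "poisson_kl c0 (lam1 B0 S0) = c0" by (simp add: assms(1) poisson_kl_def)
  ultimately have "\<forall>\<^sub>F q in F. r < poisson_kl (c q) (lam1 (B q) (S q))"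
    using assms(2) by (auto dest: order_tendstoD(1))
  with admissible show ?thesis
    by eventually_elim (auto intro!: order_less_le_trans[OF _ ltr_core_ge_poisson_kl])
qed

lemma eventually_gt_ltr_core_at_pd:
  assumes "pd S0" "ereal r < ltr_core c0 B0 S0"
  shows "\<forall>\<^sub>F q in F. ereal r < ltr_core (c q) (B q) (S q)"
proof -
  have "0 < lam1 B0 S0" using lam1_pos[OF B0 S0 pd_nonzero[OF assms(1)]] .
  moreover have "0 < det (B0 ** ((1 / lam1 B0 S0) *\<^sub>R S0))"
    using calculation pd_det_pos[OF B0] pd_det_pos[OF pd_scaleR[OF assms(1)]] by (simp add: det_mul)
  ultimately have "((\<lambda>q. poisson_kl (c q) (lam1 (B q) (S q)) + gauss_term (B q) (S q))
      \<longlongrightarrow> poisson_kl c0 (lam1 B0 S0) + gauss_term B0 S0) F"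
    using admissible unfolding gauss_term_def
    by (intro tendsto_intros tendsto_poisson_kl lim_c c0 lim_B lim_S)
      (auto elim!: eventually_mono intro: lam1_nonneg)
  then have "\<forall>\<^sub>F q in F. r < poisson_kl (c q) (lam1 (B q) (S q)) + gauss_term (B q) (S q)"
    using assms by (auto simp: ltr_core_finite dest: order_tendstoD(1))
  then show ?thesis
    by eventually_elim (auto intro!: order_less_le_trans[OF _ ltr_core_ge_finite])
qed

lemma eventually_gt_ltr_core_at_singular:
  assumes "S0 \<noteq> 0" "\<not> pd S0"
  shows "\<forall>\<^sub>F q in F. ereal r < ltr_core (c q) (B q) (S q)"
proof -
  define l where "l q = lam1 (B q) (S q)" for q
  define D where "D q = det (B q ** ((1 / l q) *\<^sub>R S q))" for q
  have "0 < lam1 B0 S0" using lam1_pos[OF B0 S0 assms(1)] .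
  have lim_l: "(l \<longlongrightarrow> lam1 B0 S0) F" unfolding l_def by (intro tendsto_lam1 lim_B lim_S)
  have "det S0 = 0" using psd_det_nonzero_imp_pd S0 assms(2) by blast
  have "(D \<longlongrightarrow> det (B0 ** ((1 / lam1 B0 S0) *\<^sub>R S0))) F"
    unfolding D_def using \<open>0 < lam1 B0 S0\<close> by (intro tendsto_intros lim_l lim_B lim_S) auto
  then have "(D \<longlongrightarrow> 0) F" using \<open>det S0 = 0\<close> by (simp add: det_mul det_scaleR)
  then have "\<forall>\<^sub>F q in F. 0 < D q \<longrightarrow> r < - l q / 2 * ln (D q)"
    using lim_l \<open>0 < lam1 B0 S0\<close> by (intro eventually_gt_neg_mult_ln)
  moreover have "\<forall>\<^sub>F q in F. S q \<noteq> 0" using lim_S assms(1) by (rule tendsto_imp_eventually_ne)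
  ultimately show ?thesis using admissible
  proof eventually_elim
    case (elim q)
    show ?case
    proof (cases "pd (S q)")
      case True
      have "0 < l q" unfolding l_def using lam1_pos elim by blast
      then have "0 < D q"
        unfolding D_def using elim pd_det_pos[of "B q"] pd_det_pos[OF pd_scaleR[OF True, of "1 / l q"]]
        by (simp add: det_mul)
      then have "r < gauss_term (B q) (S q)" using elim unfolding gauss_term_def D_def l_def by simp
      moreover have "0 \<le> poisson_kl (c q) (l q)"
        using poisson_kl_nonneg \<open>0 < l q\<close> elim by (simp add: less_imp_le)
      ultimately show ?thesis using True by (simp add: ltr_core_finite l_def)
    qed (use elim in \<open>simp add: ltr_core_infinite\<close>)
  qed
qed

lemma eventually_gt_ltr_core:
  assumes "e < ltr_core c0 B0 S0"
  shows "\<forall>\<^sub>F q in F. e < ltr_core (c q) (B q) (S q)"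
proof -
  obtain r where r: "e < ereal r" "ereal r < ltr_core c0 B0 S0" using ereal_dense2 assms by blast
  have "\<forall>\<^sub>F q in F. ereal r < ltr_core (c q) (B q) (S q)"
  proof (cases "S0 = 0")
    case True
    then show ?thesis using r(2) by (intro eventually_gt_ltr_core_at_zero) (simp_all add: ltr_core_zero)
  next
    case False
    then show ?thesis
      using r(2) eventually_gt_ltr_core_at_pd eventually_gt_ltr_core_at_singular by blast
  qed
  then show ?thesis by eventually_elim (rule order_less_trans[OF r(1)])
qed

end

lemma lsc_on_ltr:
  fixes lam2 :: "real \<Rightarrow> real^'d \<Rightarrow> real" and Sig2 :: "real \<Rightarrow> real^'d \<Rightarrow> real^'d^'d"
  assumes cont_lam2: "continuous_on ({0..1} \<times> UNIV) (\<lambda>(t, x). lam2 t x)"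
    and cont_Sig2: "continuous_on ({0..1} \<times> UNIV) (\<lambda>(t, x). Sig2 t x)"
    and pd_Sig2: "\<And>t x. t \<in> {0..1} \<Longrightarrow> pd (Sig2 t x)"
    and lam2_pos: "\<And>t x. t \<in> {0..1} \<Longrightarrow> 0 < lam2 t x"
  shows "lsc_on {(t, x, S1). t \<in> {0..1} \<and> psd S1} (\<lambda>(t, x, S1). ltr lam2 Sig2 t x S1)"
  unfolding lsc_on_def
proof (intro ballI allI impI)
  let ?D = "{(t, x, S1). t \<in> {0..1} \<and> psd (S1::real^'d^'d)}"
  define c where "c q = lam2 (fst q) (fst (snd q))" for q :: "real \<times> (real^'d) \<times> (real^'d^'d)"
  define \<Sigma> where "\<Sigma> q = Sig2 (fst q) (fst (snd q))" for q :: "real \<times> (real^'d) \<times> (real^'d^'d)"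
  have ltr_q: "(\<lambda>(t, x, S1). ltr lam2 Sig2 t x S1) q = ltr_core (c q) (matrix_inv (\<Sigma> q)) (snd (snd q))" for q
    by (simp add: c_def \<Sigma>_def split_beta ltr_eq_ltr_core)
  fix p e assume p: "p \<in> ?D" and e: "e < (\<lambda>(t, x, S1). ltr lam2 Sig2 t x S1) p"
  have img: "(\<lambda>q. (fst q, fst (snd q))) ` ?D \<subseteq> {0..1} \<times> UNIV" by auto
  have "continuous_on ?D c" "continuous_on ?D \<Sigma>"
    unfolding c_def \<Sigma>_def
    using continuous_on_compose2[OF cont_lam2 _ img] continuous_on_compose2[OF cont_Sig2 _ img]
    by (simp_all add: continuous_intros split_beta)
  then have lim_c: "(c \<longlongrightarrow> c p) (at p within ?D)" and lim_\<Sigma>: "(\<Sigma> \<longlongrightarrow> \<Sigma> p) (at p within ?D)"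
    using p by (auto simp: continuous_on_def)
  have "pd (\<Sigma> p)" using p pd_Sig2 by (auto simp: \<Sigma>_def)
  then have lim_B: "((\<lambda>q. matrix_inv (\<Sigma> q)) \<longlongrightarrow> matrix_inv (\<Sigma> p)) (at p within ?D)"
    using pd_det_pos by (intro tendsto_matrix_inv lim_\<Sigma>) force
  have lim_S: "((\<lambda>q. snd (snd q)) \<longlongrightarrow> snd (snd p)) (at p within ?D)"
    by (intro tendsto_intros)
  have "\<forall>\<^sub>F q in at p within ?D. q \<in> ?D" by (simp add: eventually_at_filter)
  then have "\<forall>\<^sub>F q in at p within ?D. 0 < c q \<and> pd (matrix_inv (\<Sigma> q)) \<and> psd (snd (snd q))"
    by eventually_elim (auto simp: c_def \<Sigma>_def intro!: lam2_pos pd_matrix_inv pd_Sig2)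
  moreover have "0 < c p" "pd (matrix_inv (\<Sigma> p))" "psd (snd (snd p))"
    using p \<open>pd (\<Sigma> p)\<close> lam2_pos by (auto simp: c_def pd_matrix_inv)
  ultimately show "\<forall>\<^sub>F q in at p within ?D. e < (\<lambda>(t, x, S1). ltr lam2 Sig2 t x S1) q"
    using eventually_gt_ltr_core[OF lim_c lim_B lim_S] e unfolding ltr_q by blast
qed

theorem mainTheorem10:
  fixes lam2 :: "real \<Rightarrow> real^'d \<Rightarrow> real"
    and Sig2 :: "real \<Rightarrow> real^'d \<Rightarrow> real^'d^'d"
    and bl bu M :: real
  assumes cont_lam2: "continuous_on ({0..1} \<times> UNIV) (\<lambda>(t, x). lam2 t x)"
    and cont_Sig2: "continuous_on ({0..1} \<times> UNIV) (\<lambda>(t, x). Sig2 t x)"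
    and pd_Sig2: "\<And>t x. t \<in> {0..1} \<Longrightarrow> pd (Sig2 t x)"
    and bl_pos: "0 < bl" and bl_le_bu: "bl \<le> bu" and M_pos: "0 < M"
    and lam2_bounds: "\<And>t x. t \<in> {0..1} \<Longrightarrow> bl \<le> lam2 t x \<and> lam2 t x \<le> bu"
    and Sig2_bound: "\<And>t x. t \<in> {0..1} \<Longrightarrow> loewner_le (Sig2 t x) (M *\<^sub>R mat 1)"
  shows "(\<forall>t\<in>{0..1}. \<forall>x. \<forall>S1. psd S1 \<longrightarrow> 0 \<le> ltr lam2 Sig2 t x S1)
       \<and> (\<forall>t\<in>{0..1}. \<forall>x. ereal_convex_on {S1. psd S1} (ltr lam2 Sig2 t x))
       \<and> lsc_on {(t, x, S1). t \<in> {0..1} \<and> psd S1} (\<lambda>(t, x, S1). ltr lam2 Sig2 t x S1)"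
proof -
  have lam2_pos: "0 < lam2 t x" if "t \<in> {0..1}" for t x
    using lam2_bounds[OF that, of x] bl_pos by linarith
  show ?thesis
  proof (intro conjI ballI allI impI)
    fix t :: real and x :: "real^'d" and S1 :: "real^'d^'d" assume "t \<in> {0..1}" "psd S1"
    then show "0 \<le> ltr lam2 Sig2 t x S1"
      unfolding ltr_eq_ltr_core by (intro ltr_core_nonneg lam2_pos pd_matrix_inv pd_Sig2)
  next
    fix t :: real and x :: "real^'d" assume "t \<in> {0..1}"
    then show "ereal_convex_on {S1. psd S1} (ltr lam2 Sig2 t x)"
      unfolding ltr_eq_ltr_core[abs_def] by (intro ereal_convex_on_ltr_core lam2_pos pd_matrix_inv pd_Sig2)
  qed (rule lsc_on_ltr[OF cont_lam2 cont_Sig2 pd_Sig2 lam2_pos])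
qed

end
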